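(* Let $\mathscr{A}\in\mathbb{R}^{n_1\times n_2\times n_3}$, $\mathscr{B}\in\mathbb{R}^{n_1\times s\times n_3}$, and suppose $k$ steps of the tensor tubal-global Golub–Kahan algorithm described in the context have been run (without breakdown). Then $$\mathscr{A}\star\mathbb{V}_k=\mathbb{U}_{k+1}\star(\widetilde{\mathscr{C}}_k\circledast\mathscr{I}_{ssn_3})=\mathbb{U}_k\star(\mathscr{C}_k\circledast\mathscr{I}_{ssn_3})+\mathscr{U}_{k+1}\star((\mathbf{a}_{k+1}\star\mathscr{E}_k)\circledast\mathscr{I}_{ssn_3}),$$ $$\mathscr{A}^T\star\mathbb{U}_k=\mathbb{V}_k\star(\mathscr{C}_k^T\circledast\mathscr{I}_{ssn_3}),\qquad \mathscr{B}=\mathbb{U}_{k+1}\star((\mathscr{E}_1^{(k+1)}\star\mathbf{a}_1)\circledast\mathscr{I}_{ssn_3}).$$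
   Context: All tensors are real third-order arrays. $\widehat{\mathscr{A}}=\mathscr{A}\times_3F_{n_3}$ denotes the tensor obtained by applying the discrete Fourier transform ($F_{n_3}$ with entries $\omega^{(i-1)(j-1)}$, $\omega=e^{-2\pi\mathrm{i}/n_3}$) to each tube; its frontal slices $\hat A^{(k)}$ are the Fourier slices. T-product: $\mathscr{A}\star\mathscr{B}$ has Fourier slices $\hat A^{(k)}\hat B^{(k)}$. Transpose $\mathscr{A}^T$: transpose each frontal slice and reverse the order of frontal slices $2,\dots,n_3$. $\mathscr{I}_{ssn_3}$: first frontal slice $I_s$, others zero. T-Kronecker product $\mathscr{A}\circledast\mathscr{B}$: Fourier slices $\hat A^{(k)}\otimes\hat B^{(k)}$. A tube is an element of $\mathbb{R}^{1\times1\times n_3}$; $\mathbf{e}$ has entries $(1,0,\dots,0)$, $\mathbf{o}$ is the zero tube. For a tube $\mathbf{a}$, $\mathbf{a}\divideontimes\mathscr{W}$ has $(i,j)$ tube $\mathbf{a}\star\mathscr{W}(i,j,:)$. Normalization of $\mathscr{W}$: $\mathbf{a}$ is the tube with $k$-th Fourier coefficient $\|\hat W^{(k)}\|_F$ (breakdown if one is zero) and $\mathscr{Q}$ has Fourier slices $\hat W^{(k)}/\|\hat W^{(k)}\|_F$; output $[\mathscr{Q},\mathbf{a}]$. Tubal-global Golub–Kahan algorithm: $\mathscr{V}_0=0\in\mathbb{R}^{n_2\times s\times n_3}$, $[\mathscr{U}_1,\mathbf{a}_1]=\mathrm{Normalization}(\mathscr{B})$; for $j=1,\dots,k$: $\widetilde{\mathscr{V}}=\mathscr{A}^T\star\mathscr{U}_j-\mathbf{a}_j\divideontimes\mathscr{V}_{j-1}$,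 $[\mathscr{V}_j,\mathbf{b}_j]=\mathrm{Normalization}(\widetilde{\mathscr{V}})$, $\widetilde{\mathscr{U}}=\mathscr{A}\star\mathscr{V}_j-\mathbf{b}_j\divideontimes\mathscr{U}_j$, $[\mathscr{U}_{j+1},\mathbf{a}_{j+1}]=\mathrm{Normalization}(\widetilde{\mathscr{U}})$. Notation: $\mathbb{V}_k=[\mathscr{V}_1,\dots,\mathscr{V}_k]\in\mathbb{R}^{n_2\times ks\times n_3}$, $\mathbb{U}_k=[\mathscr{U}_1,\dots,\mathscr{U}_k]$, $\mathbb{U}_{k+1}=[\mathbb{U}_k,\mathscr{U}_{k+1}]$ (concatenation along mode 2). $\widetilde{\mathscr{C}}_k\in\mathbb{R}^{(k+1)\times k\times n_3}$ is the bidiagonal tensor whose $(j,j)$ tube is $\mathbf{b}_j$, whose $(j+1,j)$ tube is $\mathbf{a}_{j+1}$ ($j=1,\dots,k$), and all other tubes are $\mathbf{o}$; $\mathscr{C}_k\in\mathbb{R}^{k\times k\times n_3}$ is obtained by deleting its last horizontal slice. $\mathscr{E}_k=[\mathbf{o},\dots,\mathbf{o},\mathbf{e}]\in\mathbb{R}^{1\times k\times n_3}$ and $\mathscr{E}_1^{(k+1)}=[\mathbf{e};\mathbf{o};\dots;\mathbf{o}]\in\mathbb{R}^{(k+1)\times1\times n_3}$. *)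

theory Defs
  imports Complex_Main
begin

text \<open>A real third-order tensor of size m x n x n3 is represented as a function
  of three 0-based indices; only the entries with indices in range matter.
  Complex tensors (Fourier domain) likewise.\<close>

type_synonym tensor = "nat \<Rightarrow> nat \<Rightarrow> nat \<Rightarrow> real"
type_synonym ctensor = "nat \<Rightarrow> nat \<Rightarrow> nat \<Rightarrow> complex"

definition teq :: "nat \<Rightarrow> nat \<Rightarrow> nat \<Rightarrow> tensor \<Rightarrow> tensor \<Rightarrow> bool" where
  "teq m n n3 X Y \<longleftrightarrow> (\<forall>i<m. \<forall>j<n. \<forall>t<n3. X i j t = Y i j t)"

definition tadd :: "tensor \<Rightarrow> tensor \<Rightarrow> tensor" where
  "tadd X Y = (\<lambda>i j t. X i j t + Y i j t)"

definition tsub :: "tensor \<Rightarrow> tensor \<Rightarrow> tensor" where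
  "tsub X Y = (\<lambda>i j t. X i j t - Y i j t)"

definition omega :: "nat \<Rightarrow> complex" where
  "omega n3 = cis (- 2 * pi / real n3)"

definition tfft :: "nat \<Rightarrow> tensor \<Rightarrow> ctensor" where
  "tfft n3 A = (\<lambda>i j k. \<Sum>t<n3. complex_of_real (A i j t) * omega n3 ^ (k * t))"

text \<open>Inverse DFT along the tubes (real part; applied only to Fourier data of real tensors).\<close>
definition tifft :: "nat \<Rightarrow> ctensor \<Rightarrow> tensor" where
  "tifft n3 X = (\<lambda>i j t. Re ((1 / of_nat n3) * (\<Sum>k<n3. X i j k * inverse (omega n3) ^ (t * k))))"

definition tprod :: "nat \<Rightarrow> nat \<Rightarrow> tensor \<Rightarrow> tensor \<Rightarrow> tensor" where
  "tprod m n3 A B = tifft n3 (\<lambda>i j k. \<Sum>l<m. tfft n3 A i l k * tfft n3 B l j k)"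

text \<open>Tensor transpose: transpose each frontal slice, reverse slices 2..n3.\<close>
definition ttrans :: "nat \<Rightarrow> tensor \<Rightarrow> tensor" where
  "ttrans n3 A = (\<lambda>i j t. A j i ((n3 - t) mod n3))"

definition tid :: "tensor" where
  "tid = (\<lambda>i j t. if i = j \<and> t = 0 then 1 else 0)"

definition tkron :: "nat \<Rightarrow> nat \<Rightarrow> nat \<Rightarrow> tensor \<Rightarrow> tensor \<Rightarrow> tensor" where
  "tkron p q n3 A B = tifft n3 (\<lambda>I J k.
      tfft n3 A (I div p) (J div q) k * tfft n3 B (I mod p) (J mod q) k)"

definition etube :: tensor where
  "etube = (\<lambda>i j t. if t = 0 then 1 else 0)"

definition otube :: tensor where
  "otube = (\<lambda>i j t. 0)"

definition tubemul :: "nat \<Rightarrow> tensor \<Rightarrow> tensor \<Rightarrow> tensor" where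
  "tubemul n3 a W = (\<lambda>i j t. tprod 1 n3 a (\<lambda>_ _ t'. W i j t') 0 0 t)"

definition fnorm :: "nat \<Rightarrow> nat \<Rightarrow> ctensor \<Rightarrow> nat \<Rightarrow> real" where
  "fnorm m n X k = sqrt (\<Sum>i<m. \<Sum>j<n. (cmod (X i j k))\<^sup>2)"

definition tnormalize :: "nat \<Rightarrow> nat \<Rightarrow> nat \<Rightarrow> tensor \<Rightarrow> tensor \<times> tensor" where
  "tnormalize m n n3 W =
     (tifft n3 (\<lambda>i j k. tfft n3 W i j k / complex_of_real (fnorm m n (tfft n3 W) k)),
      tifft n3 (\<lambda>i j k. complex_of_real (fnorm m n (tfft n3 W) k)))"

definition nobreak :: "nat \<Rightarrow> nat \<Rightarrow> nat \<Rightarrow> tensor \<Rightarrow> bool" where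
  "nobreak m n n3 W \<longleftrightarrow> (\<forall>k<n3. fnorm m n (tfft n3 W) k \<noteq> 0)"

text \<open>Tubal-global Golub-Kahan, A of size n1 x n2 x n3, B of size n1 x s x n3.
  gk ... j = (V_j, U_{j+1}, a_{j+1}, b_j)  (b_0 is a dummy value).\<close>
primrec gk :: "nat \<Rightarrow> nat \<Rightarrow> nat \<Rightarrow> nat \<Rightarrow> tensor \<Rightarrow> tensor \<Rightarrow> nat
                 \<Rightarrow> tensor \<times> tensor \<times> tensor \<times> tensor" where
  "gk n1 n2 n3 s A B 0 =
     (\<lambda>i j t. 0, fst (tnormalize n1 s n3 B), snd (tnormalize n1 s n3 B), \<lambda>i j t. 0)"
| "gk n1 n2 n3 s A B (Suc j) =
     (let (V, U, a, _) = gk n1 n2 n3 s A B j;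
          Vt = tsub (tprod n1 n3 (ttrans n3 A) U) (tubemul n3 a V);
          (V', b') = tnormalize n2 s n3 Vt;
          Ut = tsub (tprod n2 n3 A V') (tubemul n3 b' U);
          (U', a') = tnormalize n1 s n3 Ut
      in (V', U', a', b'))"

text \<open>U_j, a_j (j \<ge> 1) and V_j, b_j (j \<ge> 0; V_0 = 0).\<close>
definition gkU :: "nat \<Rightarrow> nat \<Rightarrow> nat \<Rightarrow> nat \<Rightarrow> tensor \<Rightarrow> tensor \<Rightarrow> nat \<Rightarrow> tensor" where
  "gkU n1 n2 n3 s A B j = fst (snd (gk n1 n2 n3 s A B (j - 1)))"

definition gka :: "nat \<Rightarrow> nat \<Rightarrow> nat \<Rightarrow> nat \<Rightarrow> tensor \<Rightarrow> tensor \<Rightarrow> nat \<Rightarrow> tensor" where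
  "gka n1 n2 n3 s A B j = fst (snd (snd (gk n1 n2 n3 s A B (j - 1))))"

definition gkV :: "nat \<Rightarrow> nat \<Rightarrow> nat \<Rightarrow> nat \<Rightarrow> tensor \<Rightarrow> tensor \<Rightarrow> nat \<Rightarrow> tensor" where
  "gkV n1 n2 n3 s A B j = fst (gk n1 n2 n3 s A B j)"

definition gkb :: "nat \<Rightarrow> nat \<Rightarrow> nat \<Rightarrow> nat \<Rightarrow> tensor \<Rightarrow> tensor \<Rightarrow> nat \<Rightarrow> tensor" where
  "gkb n1 n2 n3 s A B j = snd (snd (snd (gk n1 n2 n3 s A B j)))"

definition gkVt :: "nat \<Rightarrow> nat \<Rightarrow> nat \<Rightarrow> nat \<Rightarrow> tensor \<Rightarrow> tensor \<Rightarrow> nat \<Rightarrow> tensor" where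
  "gkVt n1 n2 n3 s A B j =
     tsub (tprod n1 n3 (ttrans n3 A) (gkU n1 n2 n3 s A B j))
      (tubemul n3 (gka n1 n2 n3 s A B j) (gkV n1 n2 n3 s A B (j - 1)))"

definition gkUt :: "nat \<Rightarrow> nat \<Rightarrow> nat \<Rightarrow> nat \<Rightarrow> tensor \<Rightarrow> tensor \<Rightarrow> nat \<Rightarrow> tensor" where
  "gkUt n1 n2 n3 s A B j =
     tsub (tprod n2 n3 A (gkV n1 n2 n3 s A B j))
      (tubemul n3 (gkb n1 n2 n3 s A B j) (gkU n1 n2 n3 s A B j))"

definition gk_no_breakdown :: "nat \<Rightarrow> nat \<Rightarrow> nat \<Rightarrow> nat \<Rightarrow> tensor \<Rightarrow> tensor \<Rightarrow> nat \<Rightarrow> bool" where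
  "gk_no_breakdown n1 n2 n3 s A B k \<longleftrightarrow>
     nobreak n1 s n3 B \<and>
     (\<forall>j\<in>{1..k}. nobreak n2 s n3 (gkVt n1 n2 n3 s A B j) \<and>
                  nobreak n1 s n3 (gkUt n1 n2 n3 s A B j))"

text \<open>Concatenations along mode 2: \<bbbU>_k = [U_1,...,U_k] (n1 x ks x n3),
  \<bbbV>_k = [V_1,...,V_k] (n2 x ks x n3).\<close>
definition bbU :: "nat \<Rightarrow> nat \<Rightarrow> nat \<Rightarrow> nat \<Rightarrow> tensor \<Rightarrow> tensor \<Rightarrow> nat \<Rightarrow> tensor" where
  "bbU n1 n2 n3 s A B k = (\<lambda>i c t. gkU n1 n2 n3 s A B (c div s + 1) i (c mod s) t)"

definition bbV :: "nat \<Rightarrow> nat \<Rightarrow> nat \<Rightarrow> nat \<Rightarrow> tensor \<Rightarrow> tensor \<Rightarrow> nat \<Rightarrow> tensor" where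
  "bbV n1 n2 n3 s A B k = (\<lambda>i c t. gkV n1 n2 n3 s A B (c div s + 1) i (c mod s) t)"

definition gkCt :: "nat \<Rightarrow> nat \<Rightarrow> nat \<Rightarrow> nat \<Rightarrow> tensor \<Rightarrow> tensor \<Rightarrow> nat \<Rightarrow> tensor" where
  "gkCt n1 n2 n3 s A B k = (\<lambda>r c t.
     if r = c then gkb n1 n2 n3 s A B (c + 1) 0 0 t
     else if r = c + 1 then gka n1 n2 n3 s A B (c + 2) 0 0 t
     else otube 0 0 t)"

definition gkC :: "nat \<Rightarrow> nat \<Rightarrow> nat \<Rightarrow> nat \<Rightarrow> tensor \<Rightarrow> tensor \<Rightarrow> nat \<Rightarrow> tensor" where
  "gkC n1 n2 n3 s A B k = (\<lambda>r c t. if r < k then gkCt n1 n2 n3 s A B k r c t else 0)"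

definition Ek :: "nat \<Rightarrow> tensor" where
  "Ek k = (\<lambda>r c t. if c = k - 1 then etube 0 0 t else otube 0 0 t)"

definition E1 :: "tensor" where
  "E1 = (\<lambda>r c t. if r = 0 then etube 0 0 t else otube 0 0 t)"

end

theory Submission
  imports Defs
begin

(* Every operation in the statement acts slice by slice on the Fourier side: the
   t-product multiplies Fourier slices, the T-Kronecker product with I_{ss n3} turns a
   k x k tube matrix into a block matrix acting on the blocks of the concatenations, and
   a tube acts on a tensor by scalar multiplication. Since the DFT along tubes is
   invertible, each of the four identities may be checked entrywise on Fourier slices,
   and for block column j there it reduces to the two recurrences defining the algorithm,
     A V_j = U_{j+1} a_{j+1} + U_j b_j   and   A^T U_j = V_j b_j + V_{j-1} a_j
   (read with the Fourier coefficients of the tubes as scalars), together with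
   B = U_1 a_1. The Fourier coefficients of a_j and b_j are Frobenius norms, hence real,
   so the conjugation produced by transposing the bidiagonal tensor is harmless. *)

lemma sum_mult_delta:
  fixes g :: "'a \<Rightarrow> 'b::comm_semiring_1"
  assumes "finite S"
  shows "(\<Sum>r\<in>S. g r * (if r = a then x else 0)) = (if a \<in> S then g a * x else 0)"
proof -
  have "g r * (if r = a then x else 0) = (if r = a then g a * x else 0)" for r
    by simp
  then show ?thesis
    using assms by simp
qed

lemma sum_mult_two_deltas:
  fixes g :: "'a \<Rightarrow> 'b::comm_semiring_1"
  assumes "finite S" and "a \<noteq> b"
  shows "(\<Sum>r\<in>S. g r * (if r = a then x else if r = b then y else 0))
    = (if a \<in> S then g a * x else 0) + (if b \<in> S then g b * y else 0)"
proof -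
  have "g r * (if r = a then x else if r = b then y else 0)
      = g r * (if r = a then x else 0) + g r * (if r = b then y else 0)" for r
    using assms(2) by simp
  then show ?thesis
    using assms(1) by (simp add: sum.distrib sum_mult_delta)
qed

lemma sum_lessThan_mult_blocks:
  fixes f :: "nat \<Rightarrow> 'a::comm_monoid_add"
  shows "(\<Sum>l<K * s. f l) = (\<Sum>r<K. \<Sum>m<s. f (r * s + m))"
proof -
  have "(\<Sum>l<K * s. f l) = (\<Sum>r<K. sum f {r * s..<r * s + s})"
    using sum.nat_group[of f s K] by simp
  also have "\<dots> = (\<Sum>r<K. \<Sum>m<s. f (r * s + m))"
    by (simp add: sum.atLeastLessThan_shift_0 atLeast0LessThan comp_def)
  finally show ?thesis .
qed

lemma lt_mult_imp_pos_div_less: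
  fixes c k s :: nat
  assumes "c < k * s"
  shows "0 < s" and "c div s < k"
  using assms by (auto simp: less_mult_imp_div_less intro: Nat.gr0I)

lemma dvd_add_diff_iff:
  fixes a b n :: nat
  assumes "a < n" and "b < n"
  shows "n dvd a + (n - b) \<longleftrightarrow> a = b"
proof (cases "b \<le> a")
  case True
  then have "a + (n - b) = (a - b) + n"
    using assms by simp
  then have "n dvd a + (n - b) \<longleftrightarrow> n dvd a - b"
    by (simp only: dvd_add_triv_right_iff)
  also have "\<dots> \<longleftrightarrow> a - b = 0"
    using nat_dvd_not_less[of "a - b" n] assms by (cases "a - b = 0") simp_all
  finally show ?thesis
    using True by simp
next
  case False
  then have "0 < a + (n - b)" and "a + (n - b) < n"
    using assms by linarith+
  then have "\<not> n dvd a + (n - b)"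
    by (rule nat_dvd_not_less)
  then show ?thesis
    using False by auto
qed

lemma mod_reflect_reflect: "k < n \<Longrightarrow> (n - (n - k) mod n) mod n = (k::nat)"
  by (cases "k = 0") auto

lemma sum_reflect:
  fixes n :: nat
  shows "(\<Sum>k<n. f ((n - k) mod n)) = (\<Sum>k<n. f k)"
  by (rule sum.reindex_bij_witness[where i = "\<lambda>k. (n - k) mod n" and j = "\<lambda>k. (n - k) mod n"])
    (auto simp: mod_reflect_reflect)

section \<open>Roots of unity and the inverse transform\<close>

lemma omega_pow: "omega n ^ m = inverse (cis (2 * pi * real m / real n))"
  by (simp add: omega_def DeMoivre cis_inverse mult_ac)

lemma cnj_omega: "cnj (omega n) = inverse (omega n)"
  by (simp add: omega_def cis_cnj cis_inverse)

(* Spectra of real tubes have this symmetry; since tifft keeps only the real part,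
   it inverts tfft exactly on such spectra. *)
definition conj_symmetric :: "nat \<Rightarrow> ctensor \<Rightarrow> bool" where
  "conj_symmetric n X \<longleftrightarrow> (\<forall>i j k. k < n \<longrightarrow> X i j ((n - k) mod n) = cnj (X i j k))"

locale dft =
  fixes n :: nat
  assumes n_pos: "0 < n"
begin

lemma omega_pow_n: "omega n ^ n = 1"
  using n_pos by (simp add: omega_pow)

lemma omega_pow_mod: "omega n ^ (m mod n) = omega n ^ m"
proof -
  have "omega n ^ m = omega n ^ (n * (m div n) + m mod n)"
    by simp
  also have "\<dots> = (omega n ^ n) ^ (m div n) * omega n ^ (m mod n)"
    by (simp only: power_add power_mult)
  finally show ?thesis
    by (simp add: omega_pow_n)
qed

lemma omega_pow_eq_1_iff: "omega n ^ m = 1 \<longleftrightarrow> n dvd m"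
proof -
  have "inj_on (\<lambda>k. cis (2 * pi * real k / real n)) {..<n}"
    using bij_betw_roots_unity[OF n_pos] by (rule bij_betw_imp_inj_on)
  then have "cis (2 * pi * real (m mod n) / real n) = cis (2 * pi * real 0 / real n) \<longleftrightarrow> m mod n = 0"
    using n_pos by (intro inj_on_eq_iff) auto
  then have "cis (2 * pi * real (m mod n) / real n) = 1 \<longleftrightarrow> m mod n = 0"
    by simp
  moreover have "omega n ^ m = inverse (cis (2 * pi * real (m mod n) / real n))"
    unfolding omega_pow_mod[of m, symmetric] by (rule omega_pow)
  ultimately show ?thesis
    by (simp only: inverse_eq_1_iff dvd_eq_mod_eq_0)
qed

lemma inverse_omega_pow:
  assumes "t \<le> n"
  shows "inverse (omega n) ^ (t * k) = omega n ^ ((n - t) * k)"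
proof -
  have "(n - t) * k + t * k = n * k"
    using assms by (simp flip: add_mult_distrib)
  then have "omega n ^ (t * k) * omega n ^ ((n - t) * k) = (omega n ^ n) ^ k"
    by (simp flip: power_add power_mult add: add.commute)
  then have "inverse (omega n ^ (t * k)) = omega n ^ ((n - t) * k)"
    by (intro inverse_unique) (simp add: omega_pow_n)
  then show ?thesis
    by (simp only: power_inverse)
qed

lemma omega_pow_reflect:
  assumes "t \<le> n"
  shows "omega n ^ (k * ((n - t) mod n)) = inverse (omega n) ^ (t * k)"
proof -
  have "k * ((n - t) mod n) mod n = (n - t) * k mod n"
    by (simp add: mod_mult_right_eq mult.commute)
  then have "omega n ^ (k * ((n - t) mod n) mod n) = omega n ^ ((n - t) * k mod n)"
    by (rule arg_cong)
  then show ?thesis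
    unfolding omega_pow_mod inverse_omega_pow[OF assms] .
qed

lemma sum_omega_pow: "(\<Sum>j<n. omega n ^ (j * m)) = (if n dvd m then of_nat n else 0)"
proof -
  have "(\<Sum>j<n. omega n ^ (j * m)) = (\<Sum>j<n. (omega n ^ m) ^ j)"
    by (simp only: mult.commute[of _ m] power_mult)
  moreover have "(omega n ^ m) ^ n = 1"
    by (simp only: power_mult[symmetric] mult.commute[of m n]) (simp add: power_mult omega_pow_n)
  ultimately show ?thesis
    by (simp add: omega_pow_eq_1_iff sum_gp_strict)
qed

lemma omega_orthogonal:
  assumes "a < n" and "b < n"
  shows "(\<Sum>j<n. omega n ^ (j * a) * inverse (omega n) ^ (b * j)) = (if a = b then of_nat n else 0)"
proof -
  have "omega n ^ (j * a) * inverse (omega n) ^ (b * j) = omega n ^ (j * (a + (n - b)))" for j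
  proof -
    have "inverse (omega n) ^ (b * j) = omega n ^ (j * (n - b))"
      using inverse_omega_pow[of b j] assms by (simp add: mult.commute)
    then show ?thesis
      by (simp only: power_add[symmetric] distrib_left)
  qed
  then have "(\<Sum>j<n. omega n ^ (j * a) * inverse (omega n) ^ (b * j)) = (\<Sum>j<n. omega n ^ (j * (a + (n - b))))"
    by simp
  also have "\<dots> = (if a = b then of_nat n else 0)"
    unfolding sum_omega_pow dvd_add_diff_iff[OF assms] ..
  finally show ?thesis .
qed

lemma tfft_reflect: "k < n \<Longrightarrow> tfft n A i j ((n - k) mod n) = cnj (tfft n A i j k)"
  by (simp add: tfft_def omega_pow_reflect mult.commute[of "(n - k) mod n"] cnj_omega power_inverse)

lemma tifft_tfft:
  assumes "t < n"
  shows "tifft n (tfft n A) i j t = A i j t"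
proof -
  have "(\<Sum>k<n. tfft n A i j k * inverse (omega n) ^ (t * k))
      = (\<Sum>k<n. \<Sum>t'<n. of_real (A i j t') * (omega n ^ (k * t') * inverse (omega n) ^ (t * k)))"
    by (simp add: tfft_def sum_distrib_right mult.assoc)
  also have "\<dots> = (\<Sum>t'<n. of_real (A i j t') * (\<Sum>k<n. omega n ^ (k * t') * inverse (omega n) ^ (t * k)))"
    by (subst sum.swap) (simp add: sum_distrib_left)
  also have "\<dots> = (\<Sum>t'<n. of_real (A i j t') * (if t' = t then of_nat n else 0))"
    using assms by (intro sum.cong refl) (simp add: omega_orthogonal)
  also have "\<dots> = of_nat n * of_real (A i j t)"
    using assms by (simp add: if_distrib sum.delta cong: if_cong)
  finally show ?thesis
    unfolding tifft_def using n_pos by simp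
qed

lemma of_real_tifft:
  assumes "conj_symmetric n X"
  shows "complex_of_real (tifft n X i j t) = 1 / of_nat n * (\<Sum>k<n. X i j k * inverse (omega n) ^ (t * k))"
proof -
  have "cnj (\<Sum>k<n. X i j k * inverse (omega n) ^ (t * k))
      = (\<Sum>k<n. X i j ((n - k) mod n) * omega n ^ (t * k))"
    using assms by (simp add: conj_symmetric_def cnj_omega)
  also have "\<dots> = (\<Sum>k<n. (\<lambda>k. X i j k * omega n ^ (t * ((n - k) mod n))) ((n - k) mod n))"
    by (intro sum.cong refl) (simp add: mod_reflect_reflect)
  also have "\<dots> = (\<Sum>k<n. X i j k * omega n ^ (t * ((n - k) mod n)))"
    by (rule sum_reflect)
  also have "\<dots> = (\<Sum>k<n. X i j k * inverse (omega n) ^ (t * k))"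
    by (intro sum.cong refl) (simp add: omega_pow_reflect mult.commute)
  finally have "1 / of_nat n * (\<Sum>k<n. X i j k * inverse (omega n) ^ (t * k)) \<in> \<real>"
    by (simp add: Reals_cnj_iff)
  then show ?thesis
    unfolding tifft_def by (rule of_real_Re)
qed

lemma tfft_tifft:
  assumes "conj_symmetric n X" and "k < n"
  shows "tfft n (tifft n X) i j k = X i j k"
proof -
  have "tfft n (tifft n X) i j k
      = (\<Sum>t<n. 1 / of_nat n * (\<Sum>k'<n. X i j k' * inverse (omega n) ^ (t * k')) * omega n ^ (k * t))"
    by (simp add: tfft_def of_real_tifft[OF assms(1)])
  also have "\<dots> = 1 / of_nat n * (\<Sum>t<n. \<Sum>k'<n. X i j k' * (omega n ^ (t * k) * inverse (omega n) ^ (k' * t)))"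
    by (simp add: sum_distrib_left sum_distrib_right mult_ac)
  also have "\<dots> = 1 / of_nat n * (\<Sum>k'<n. X i j k' * (\<Sum>t<n. omega n ^ (t * k) * inverse (omega n) ^ (k' * t)))"
    by (subst sum.swap) (simp add: sum_distrib_left)
  also have "\<dots> = 1 / of_nat n * (\<Sum>k'<n. X i j k' * (if k = k' then of_nat n else 0))"
    using assms(2) by (intro arg_cong[where f = "\<lambda>x. _ * x"] sum.cong refl) (simp add: omega_orthogonal)
  also have "\<dots> = X i j k"
    using assms(2) n_pos by (simp add: if_distrib sum.delta cong: if_cong)
  finally show ?thesis .
qed

lemma teq_if_tfft_eq:
  assumes "\<And>i j k. i < p \<Longrightarrow> j < q \<Longrightarrow> k < n \<Longrightarrow> tfft n X i j k = tfft n Y i j k"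
  shows "teq p q n X Y"
  unfolding teq_def
proof (intro allI impI)
  fix i j t
  assume "i < p" and "j < q" and "t < n"
  then have "(\<Sum>k<n. tfft n X i j k * inverse (omega n) ^ (t * k))
      = (\<Sum>k<n. tfft n Y i j k * inverse (omega n) ^ (t * k))"
    using assms by (intro sum.cong) auto
  then have "tifft n (tfft n X) i j t = tifft n (tfft n Y) i j t"
    unfolding tifft_def by (simp only:)
  then show "X i j t = Y i j t"
    using \<open>t < n\<close> by (simp add: tifft_tfft)
qed

end

section \<open>Fourier slices of the tensor operations\<close>

lemma tfft_tadd: "tfft n (tadd X Y) i j k = tfft n X i j k + tfft n Y i j k"
  by (simp add: tfft_def tadd_def distrib_right sum.distrib)

lemma tfft_tsub: "tfft n (tsub X Y) i j k = tfft n X i j k - tfft n Y i j k"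
  by (simp add: tfft_def tsub_def left_diff_distrib sum_subtractf)

lemma tfft_zero: "tfft n (\<lambda>i j t. 0) i j k = 0"
  by (simp add: tfft_def)

lemma tfft_bbU: "tfft n (bbU n1 n2 n3 s A B K) i c w = tfft n (gkU n1 n2 n3 s A B (c div s + 1)) i (c mod s) w"
  by (simp add: tfft_def bbU_def)

lemma tfft_bbV: "tfft n (bbV n1 n2 n3 s A B K) i c w = tfft n (gkV n1 n2 n3 s A B (c div s + 1)) i (c mod s) w"
  by (simp add: tfft_def bbV_def)

lemma tfft_gkCt: "tfft n (gkCt n1 n2 n3 s A B K) r c w =
    (if r = c then tfft n (gkb n1 n2 n3 s A B (c + 1)) 0 0 w
     else if r = c + 1 then tfft n (gka n1 n2 n3 s A B (c + 2)) 0 0 w else 0)"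
  by (simp add: tfft_def gkCt_def otube_def)

lemma tfft_gkC: "tfft n (gkC n1 n2 n3 s A B K) r c w =
    (if r < K then tfft n (gkCt n1 n2 n3 s A B K) r c w else 0)"
  by (simp add: tfft_def gkC_def)

context dft
begin

lemma tfft_tprod: "k < n \<Longrightarrow> tfft n (tprod m n A B) i j k = (\<Sum>l<m. tfft n A i l k * tfft n B l j k)"
  unfolding tprod_def by (rule tfft_tifft) (auto simp: conj_symmetric_def tfft_reflect)

lemma tfft_tkron: "k < n \<Longrightarrow> tfft n (tkron p q n A B) i j k
    = tfft n A (i div p) (j div q) k * tfft n B (i mod p) (j mod q) k"
  unfolding tkron_def by (rule tfft_tifft) (auto simp: conj_symmetric_def tfft_reflect)

lemma tfft_tid: "tfft n tid i j k = (if i = j then 1 else 0)"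
proof -
  have "tfft n tid i j k = (\<Sum>t<n. if t = 0 then (if i = j then 1 else 0) else 0)"
    unfolding tfft_def tid_def by (intro sum.cong) auto
  then show ?thesis
    using n_pos by simp
qed

lemma tfft_etube: "tfft n etube i j k = 1"
proof -
  have "tfft n etube i j k = (\<Sum>t<n. if t = 0 then 1 else 0)"
    unfolding tfft_def etube_def by (intro sum.cong) auto
  then show ?thesis
    using n_pos by simp
qed

lemma tfft_E1: "tfft n E1 r c w = (if r = 0 then 1 else 0)"
  using tfft_etube by (simp add: tfft_def E1_def otube_def)

lemma tfft_Ek: "tfft n (Ek K) r c w = (if c = K - 1 then 1 else 0)"
  using tfft_etube by (simp add: tfft_def Ek_def otube_def)

lemma tfft_ttrans: "tfft n (ttrans n A) i j k = cnj (tfft n A j i k)"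
proof -
  have "tfft n (ttrans n A) i j k
      = (\<Sum>t<n. (\<lambda>t. of_real (A j i t) * omega n ^ (k * ((n - t) mod n))) ((n - t) mod n))"
    unfolding tfft_def ttrans_def by (intro sum.cong refl) (simp add: mod_reflect_reflect)
  also have "\<dots> = (\<Sum>t<n. of_real (A j i t) * omega n ^ (k * ((n - t) mod n)))"
    by (rule sum_reflect)
  also have "\<dots> = cnj (tfft n A j i k)"
    by (simp add: tfft_def omega_pow_reflect cnj_omega power_inverse mult.commute)
  finally show ?thesis .
qed

lemma tfft_tubemul:
  assumes "k < n"
  shows "tfft n (tubemul n a W) i j k = tfft n a 0 0 k * tfft n W i j k"
proof -
  have "tfft n (tubemul n a W) i j k = tfft n (tprod 1 n a (\<lambda>_ _ t. W i j t)) 0 0 k"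
    by (simp add: tubemul_def tfft_def)
  also have "\<dots> = tfft n a 0 0 k * tfft n W i j k"
    using assms by (simp add: tfft_tprod) (simp add: tfft_def)
  finally show ?thesis .
qed

lemma fnorm_reflect: "k < n \<Longrightarrow> fnorm p q (tfft n W) ((n - k) mod n) = fnorm p q (tfft n W) k"
  by (simp add: fnorm_def tfft_reflect)

lemma tfft_tnormalize:
  assumes "k < n"
  shows "tfft n (fst (tnormalize p q n W)) i j k = tfft n W i j k / of_real (fnorm p q (tfft n W) k)"
    and "tfft n (snd (tnormalize p q n W)) i j k = of_real (fnorm p q (tfft n W) k)"
  unfolding tnormalize_def fst_conv snd_conv using assms
  by (auto intro!: tfft_tifft simp: conj_symmetric_def tfft_reflect fnorm_reflect)

lemma tfft_eq_tnormalize_mult: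
  assumes "nobreak p q n W" and "k < n"
  shows "tfft n W i j k = tfft n (fst (tnormalize p q n W)) i j k * tfft n (snd (tnormalize p q n W)) 0 0 k"
  using assms by (simp add: tfft_tnormalize nobreak_def)

lemma tfft_tprod_tkron_tid:
  assumes "0 < s" and "k < n"
  shows "tfft n (tprod (K * s) n X (tkron s s n C tid)) i c k
    = (\<Sum>r<K. tfft n X i (r * s + c mod s) k * tfft n C r (c div s) k)"
proof -
  have "tfft n (tprod (K * s) n X (tkron s s n C tid)) i c k
      = (\<Sum>r<K. \<Sum>m<s. tfft n X i (r * s + m) k * tfft n C r (c div s) k * (if m = c mod s then 1 else 0))"
    using assms by (simp add: tfft_tprod tfft_tkron tfft_tid sum_lessThan_mult_blocks mult.assoc)
  also have "\<dots> = (\<Sum>r<K. tfft n X i (r * s + c mod s) k * tfft n C r (c div s) k)"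
    using assms by (simp add: if_distrib sum.delta cong: if_cong)
  finally show ?thesis .
qed

end

section \<open>The Golub--Kahan relations\<close>

lemma gkV_0: "gkV n1 n2 n3 s A B 0 = (\<lambda>i j t. 0)"
  by (simp add: gkV_def)

lemma gkU_1: "gkU n1 n2 n3 s A B (Suc 0) = fst (tnormalize n1 s n3 B)"
  by (simp add: gkU_def)

lemma gka_1: "gka n1 n2 n3 s A B (Suc 0) = snd (tnormalize n1 s n3 B)"
  by (simp add: gka_def)

lemma gkV_Suc: "gkV n1 n2 n3 s A B (Suc j) = fst (tnormalize n2 s n3 (gkVt n1 n2 n3 s A B (Suc j)))"
  by (simp add: gkV_def gkVt_def gkU_def gka_def Let_def split: prod.split)

lemma gkb_Suc: "gkb n1 n2 n3 s A B (Suc j) = snd (tnormalize n2 s n3 (gkVt n1 n2 n3 s A B (Suc j)))"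
  by (simp add: gkb_def gkVt_def gkV_def gkU_def gka_def Let_def split: prod.split)

lemma gkU_Suc_Suc: "gkU n1 n2 n3 s A B (Suc (Suc j)) = fst (tnormalize n1 s n3 (gkUt n1 n2 n3 s A B (Suc j)))"
  by (simp add: gkU_def gkUt_def gkV_def gkVt_def gka_def gkb_def Let_def split: prod.split)

lemma gka_Suc_Suc: "gka n1 n2 n3 s A B (Suc (Suc j)) = snd (tnormalize n1 s n3 (gkUt n1 n2 n3 s A B (Suc j)))"
  by (simp add: gka_def gkUt_def gkV_def gkVt_def gkU_def gkb_def Let_def split: prod.split)

lemma gk_no_breakdownD:
  assumes "gk_no_breakdown n1 n2 n3 s A B k"
  shows "nobreak n1 s n3 B"
    and "0 < j \<Longrightarrow> j \<le> k \<Longrightarrow> nobreak n2 s n3 (gkVt n1 n2 n3 s A B j)"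
    and "0 < j \<Longrightarrow> j \<le> k \<Longrightarrow> nobreak n1 s n3 (gkUt n1 n2 n3 s A B j)"
  using assms by (auto simp: gk_no_breakdown_def)

locale golub_kahan = dft n3 for n3 +
  fixes n1 n2 s :: nat and A B :: tensor
begin

abbreviation "U \<equiv> gkU n1 n2 n3 s A B"
abbreviation "V \<equiv> gkV n1 n2 n3 s A B"
abbreviation "\<alpha> j w \<equiv> tfft n3 (gka n1 n2 n3 s A B j) 0 0 w"
abbreviation "\<beta> j w \<equiv> tfft n3 (gkb n1 n2 n3 s A B j) 0 0 w"
abbreviation "UU \<equiv> bbU n1 n2 n3 s A B"
abbreviation "VV \<equiv> bbV n1 n2 n3 s A B"
abbreviation "Ct \<equiv> gkCt n1 n2 n3 s A B"
abbreviation "C \<equiv> gkC n1 n2 n3 s A B"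

lemma cnj_\<alpha>:
  assumes "0 < j" and "w < n3"
  shows "cnj (\<alpha> j w) = \<alpha> j w"
proof -
  obtain j' where "j = Suc j'"
    using assms(1) gr0_implies_Suc by blast
  then show ?thesis
    using assms(2) by (cases j') (simp_all add: gka_1 gka_Suc_Suc tfft_tnormalize)
qed

lemma cnj_\<beta>:
  assumes "0 < j" and "w < n3"
  shows "cnj (\<beta> j w) = \<beta> j w"
  using assms by (cases j) (simp_all add: gkb_Suc tfft_tnormalize)

lemma tfft_B:
  assumes "nobreak n1 s n3 B" and "w < n3"
  shows "tfft n3 B i c w = tfft n3 (U 1) i c w * \<alpha> 1 w"
  using tfft_eq_tnormalize_mult[OF assms] by (simp add: gkU_1 gka_1)

lemma tfft_A_V:
  assumes "nobreak n1 s n3 (gkUt n1 n2 n3 s A B j)" and "0 < j" and "w < n3"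
  shows "tfft n3 (tprod n2 n3 A (V j)) i c w
    = tfft n3 (U (j + 1)) i c w * \<alpha> (j + 1) w + \<beta> j w * tfft n3 (U j) i c w"
proof -
  obtain j' where j': "j = Suc j'"
    using assms(2) gr0_implies_Suc by blast
  have "tfft n3 (gkUt n1 n2 n3 s A B j) i c w = tfft n3 (U (j + 1)) i c w * \<alpha> (j + 1) w"
    using tfft_eq_tnormalize_mult[OF assms(1,3)] by (simp add: j' gkU_Suc_Suc gka_Suc_Suc)
  moreover have "tfft n3 (gkUt n1 n2 n3 s A B j) i c w
      = tfft n3 (tprod n2 n3 A (V j)) i c w - \<beta> j w * tfft n3 (U j) i c w"
    using assms(3) by (simp add: gkUt_def tfft_tsub tfft_tubemul)
  ultimately show ?thesis
    by (simp add: algebra_simps)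
qed

lemma tfft_AT_U:
  assumes "nobreak n2 s n3 (gkVt n1 n2 n3 s A B j)" and "0 < j" and "w < n3"
  shows "tfft n3 (tprod n1 n3 (ttrans n3 A) (U j)) i c w
    = tfft n3 (V j) i c w * \<beta> j w + \<alpha> j w * tfft n3 (V (j - 1)) i c w"
proof -
  obtain j' where j': "j = Suc j'"
    using assms(2) gr0_implies_Suc by blast
  have "tfft n3 (gkVt n1 n2 n3 s A B j) i c w = tfft n3 (V j) i c w * \<beta> j w"
    using tfft_eq_tnormalize_mult[OF assms(1,3)] by (simp add: j' gkV_Suc gkb_Suc)
  moreover have "tfft n3 (gkVt n1 n2 n3 s A B j) i c w
      = tfft n3 (tprod n1 n3 (ttrans n3 A) (U j)) i c w - \<alpha> j w * tfft n3 (V (j - 1)) i c w"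
    using assms(3) by (simp add: gkVt_def tfft_tsub tfft_tubemul)
  ultimately show ?thesis
    by (simp add: algebra_simps)
qed

lemma tfft_UU_Ct:
  assumes "c < k * s" and "w < n3"
  shows "tfft n3 (tprod ((k + 1) * s) n3 (UU (k + 1)) (tkron s s n3 (Ct k) tid)) i c w
    = tfft n3 (U (c div s + 1)) i (c mod s) w * \<beta> (c div s + 1) w
      + tfft n3 (U (c div s + 2)) i (c mod s) w * \<alpha> (c div s + 2) w"
proof -
  note s = lt_mult_imp_pos_div_less[OF assms(1)]
  have "tfft n3 (tprod ((k + 1) * s) n3 (UU (k + 1)) (tkron s s n3 (Ct k) tid)) i c w
    = (\<Sum>r<k + 1. tfft n3 (U (r + 1)) i (c mod s) w *
        (if r = c div s then \<beta> (c div s + 1) w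
         else if r = c div s + 1 then \<alpha> (c div s + 2) w else 0))"
    using s assms(2) by (intro trans[OF tfft_tprod_tkron_tid] sum.cong) (auto simp: tfft_bbU tfft_gkCt)
  also have "\<dots> = tfft n3 (U (c div s + 1)) i (c mod s) w * \<beta> (c div s + 1) w
      + tfft n3 (U (c div s + 2)) i (c mod s) w * \<alpha> (c div s + 2) w"
    by (subst sum_mult_two_deltas) (use s in auto)
  finally show ?thesis .
qed

lemma tfft_UU_C:
  assumes "c < k * s" and "w < n3"
  shows "tfft n3 (tprod (k * s) n3 (UU k) (tkron s s n3 (C k) tid)) i c w
    = tfft n3 (U (c div s + 1)) i (c mod s) w * \<beta> (c div s + 1) w
      + (if c div s + 1 < k then tfft n3 (U (c div s + 2)) i (c mod s) w * \<alpha> (c div s + 2) w else 0)"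
proof -
  note s = lt_mult_imp_pos_div_less[OF assms(1)]
  have "tfft n3 (tprod (k * s) n3 (UU k) (tkron s s n3 (C k) tid)) i c w
    = (\<Sum>r<k. tfft n3 (U (r + 1)) i (c mod s) w *
        (if r = c div s then \<beta> (c div s + 1) w
         else if r = c div s + 1 then \<alpha> (c div s + 2) w else 0))"
    using s assms(2) by (intro trans[OF tfft_tprod_tkron_tid] sum.cong) (auto simp: tfft_bbU tfft_gkC tfft_gkCt)
  also have "\<dots> = tfft n3 (U (c div s + 1)) i (c mod s) w * \<beta> (c div s + 1) w
      + (if c div s + 1 < k then tfft n3 (U (c div s + 2)) i (c mod s) w * \<alpha> (c div s + 2) w else 0)"
    using s by (simp add: sum_mult_two_deltas)
  finally show ?thesis .
qed

lemma tfft_U_aEk: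
  assumes "c < k * s" and "w < n3"
  shows "tfft n3 (tprod s n3 (U (k + 1)) (tkron s s n3 (tprod 1 n3 (gka n1 n2 n3 s A B (k + 1)) (Ek k)) tid)) i c w
    = (if c div s = k - 1 then tfft n3 (U (k + 1)) i (c mod s) w * \<alpha> (k + 1) w else 0)"
  using tfft_tprod_tkron_tid[of s w 1] lt_mult_imp_pos_div_less[OF assms(1)] assms(2)
  by (simp add: tfft_tprod tfft_Ek)

lemma tfft_VV_CT:
  assumes "c < k * s" and "w < n3"
  shows "tfft n3 (tprod (k * s) n3 (VV k) (tkron s s n3 (ttrans n3 (C k)) tid)) i c w
    = tfft n3 (V (c div s + 1)) i (c mod s) w * \<beta> (c div s + 1) w
      + \<alpha> (c div s + 1) w * tfft n3 (V (c div s)) i (c mod s) w"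
proof -
  note s = lt_mult_imp_pos_div_less[OF assms(1)]
  have "tfft n3 (tprod (k * s) n3 (VV k) (tkron s s n3 (ttrans n3 (C k)) tid)) i c w
    = (\<Sum>r<k. tfft n3 (V (r + 1)) i (c mod s) w *
        (if r = c div s then \<beta> (c div s + 1) w
         else if Suc r = c div s then \<alpha> (c div s + 1) w else 0))"
    using s assms(2)
    by (intro trans[OF tfft_tprod_tkron_tid] sum.cong) (auto simp: tfft_bbV tfft_ttrans tfft_gkC tfft_gkCt cnj_\<alpha> cnj_\<beta>)
  also have "\<dots> = tfft n3 (V (c div s + 1)) i (c mod s) w * \<beta> (c div s + 1) w
      + \<alpha> (c div s + 1) w * tfft n3 (V (c div s)) i (c mod s) w"
  proof (cases "c div s")
    case 0
    then show ?thesis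
      using s by (simp add: sum_mult_delta gkV_0 tfft_zero cong: if_cong)
  next
    case (Suc d)
    then show ?thesis
      using s sum_mult_two_deltas[of "{..<k}" "c div s" d] by (simp add: mult.commute cong: if_cong)
  qed
  finally show ?thesis .
qed

lemma A_VV_eq_UU_Ct:
  assumes "gk_no_breakdown n1 n2 n3 s A B k"
  shows "teq n1 (k * s) n3 (tprod n2 n3 A (VV k)) (tprod ((k + 1) * s) n3 (UU (k + 1)) (tkron s s n3 (Ct k) tid))"
proof (rule teq_if_tfft_eq)
  fix i c w
  assume c: "c < k * s" and w: "w < n3"
  have nb: "nobreak n1 s n3 (gkUt n1 n2 n3 s A B (c div s + 1))"
    using gk_no_breakdownD(3)[OF assms] lt_mult_imp_pos_div_less[OF c] by simp
  have "tfft n3 (tprod n2 n3 A (VV k)) i c w = tfft n3 (tprod n2 n3 A (V (c div s + 1))) i (c mod s) w"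
    using w by (simp add: tfft_tprod tfft_bbV)
  also have "\<dots> = tfft n3 (U (c div s + 2)) i (c mod s) w * \<alpha> (c div s + 2) w
      + \<beta> (c div s + 1) w * tfft n3 (U (c div s + 1)) i (c mod s) w"
    using tfft_A_V[OF nb _ w] by simp
  finally show "tfft n3 (tprod n2 n3 A (VV k)) i c w
      = tfft n3 (tprod ((k + 1) * s) n3 (UU (k + 1)) (tkron s s n3 (Ct k) tid)) i c w"
    using tfft_UU_Ct[OF c w] by (simp add: algebra_simps)
qed

lemma UU_Ct_split:
  "teq n1 (k * s) n3
     (tprod ((k + 1) * s) n3 (UU (k + 1)) (tkron s s n3 (Ct k) tid))
     (tadd (tprod (k * s) n3 (UU k) (tkron s s n3 (C k) tid))
        (tprod s n3 (U (k + 1)) (tkron s s n3 (tprod 1 n3 (gka n1 n2 n3 s A B (k + 1)) (Ek k)) tid)))"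
proof (rule teq_if_tfft_eq)
  fix i c w
  assume c: "c < k * s" and w: "w < n3"
  have "c div s + 1 < k \<or> c div s + 2 = k + 1 \<and> c div s = k - 1"
    using lt_mult_imp_pos_div_less(2)[OF c] by linarith
  then show "tfft n3 (tprod ((k + 1) * s) n3 (UU (k + 1)) (tkron s s n3 (Ct k) tid)) i c w
    = tfft n3 (tadd (tprod (k * s) n3 (UU k) (tkron s s n3 (C k) tid))
        (tprod s n3 (U (k + 1)) (tkron s s n3 (tprod 1 n3 (gka n1 n2 n3 s A B (k + 1)) (Ek k)) tid))) i c w"
    using tfft_UU_Ct[OF c w] tfft_UU_C[OF c w] tfft_U_aEk[OF c w] by (auto simp: tfft_tadd)
qed

lemma AT_UU_eq_VV_CT:
  assumes "gk_no_breakdown n1 n2 n3 s A B k"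
  shows "teq n2 (k * s) n3 (tprod n1 n3 (ttrans n3 A) (UU k)) (tprod (k * s) n3 (VV k) (tkron s s n3 (ttrans n3 (C k)) tid))"
proof (rule teq_if_tfft_eq)
  fix i c w
  assume c: "c < k * s" and w: "w < n3"
  have nb: "nobreak n2 s n3 (gkVt n1 n2 n3 s A B (c div s + 1))"
    using gk_no_breakdownD(2)[OF assms] lt_mult_imp_pos_div_less[OF c] by simp
  have "tfft n3 (tprod n1 n3 (ttrans n3 A) (UU k)) i c w
      = tfft n3 (tprod n1 n3 (ttrans n3 A) (U (c div s + 1))) i (c mod s) w"
    using w by (simp add: tfft_tprod tfft_bbU)
  also have "\<dots> = tfft n3 (V (c div s + 1)) i (c mod s) w * \<beta> (c div s + 1) w
      + \<alpha> (c div s + 1) w * tfft n3 (V (c div s)) i (c mod s) w"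
    using tfft_AT_U[OF nb _ w] by simp
  finally show "tfft n3 (tprod n1 n3 (ttrans n3 A) (UU k)) i c w
      = tfft n3 (tprod (k * s) n3 (VV k) (tkron s s n3 (ttrans n3 (C k)) tid)) i c w"
    using tfft_VV_CT[OF c w] by simp
qed

lemma B_eq_UU_E1:
  assumes "gk_no_breakdown n1 n2 n3 s A B k"
  shows "teq n1 s n3 B (tprod ((k + 1) * s) n3 (UU (k + 1)) (tkron s s n3 (tprod 1 n3 E1 (gka n1 n2 n3 s A B 1)) tid))"
proof (rule teq_if_tfft_eq)
  fix i c w
  assume c: "c < s" and w: "w < n3"
  have "tfft n3 (tprod ((k + 1) * s) n3 (UU (k + 1)) (tkron s s n3 (tprod 1 n3 E1 (gka n1 n2 n3 s A B 1)) tid)) i c w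
      = (\<Sum>r<k + 1. tfft n3 (U (r + 1)) i c w * (if r = 0 then \<alpha> 1 w else 0))"
    using c w by (intro trans[OF tfft_tprod_tkron_tid] sum.cong) (auto simp: tfft_bbU tfft_tprod tfft_E1)
  also have "\<dots> = tfft n3 B i c w"
    using tfft_B[OF gk_no_breakdownD(1)[OF assms] w] by (simp add: sum_mult_delta)
  finally show "tfft n3 B i c w = tfft n3 (tprod ((k + 1) * s) n3 (UU (k + 1))
      (tkron s s n3 (tprod 1 n3 E1 (gka n1 n2 n3 s A B 1)) tid)) i c w"
    by simp
qed

end

theorem proposition13:
  fixes n1 n2 n3 s k :: nat and A B :: tensor
  assumes "n3 > 0"
    and "gk_no_breakdown n1 n2 n3 s A B k"
  shows "teq n1 (k * s) n3
           (tprod n2 n3 A (bbV n1 n2 n3 s A B k))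
           (tprod ((k + 1) * s) n3 (bbU n1 n2 n3 s A B (k + 1))
              (tkron s s n3 (gkCt n1 n2 n3 s A B k) tid))
       \<and> teq n1 (k * s) n3
           (tprod ((k + 1) * s) n3 (bbU n1 n2 n3 s A B (k + 1))
              (tkron s s n3 (gkCt n1 n2 n3 s A B k) tid))
           (tadd (tprod (k * s) n3 (bbU n1 n2 n3 s A B k)
              (tkron s s n3 (gkC n1 n2 n3 s A B k) tid))
            (tprod s n3 (gkU n1 n2 n3 s A B (k + 1))
              (tkron s s n3 (tprod 1 n3 (gka n1 n2 n3 s A B (k + 1)) (Ek k)) tid)))
       \<and> teq n2 (k * s) n3
           (tprod n1 n3 (ttrans n3 A) (bbU n1 n2 n3 s A B k))
           (tprod (k * s) n3 (bbV n1 n2 n3 s A B k)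
              (tkron s s n3 (ttrans n3 (gkC n1 n2 n3 s A B k)) tid))
       \<and> teq n1 s n3 B
           (tprod ((k + 1) * s) n3 (bbU n1 n2 n3 s A B (k + 1))
              (tkron s s n3 (tprod 1 n3 E1 (gka n1 n2 n3 s A B 1)) tid))"
proof -
  interpret golub_kahan n3 n1 n2 s A B
    by unfold_locales (rule assms(1))
  show ?thesis
    using A_VV_eq_UU_Ct[OF assms(2)] UU_Ct_split AT_UU_eq_VV_CT[OF assms(2)] B_eq_UU_E1[OF assms(2)]
    by blast
qed

end
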